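(* Let $G=A\oplus B$ be an abelian group such that $\mathrm{Hom}(B,A)=\{0\}$. Then $G$ is strongly co-Hopfian if and only if both $A$ and $B$ are strongly co-Hopfian.
   Context: All groups are additive abelian groups. A group $G$ is strongly co-Hopfian (Sco-H) if for every endomorphism $f$ of $G$ the descending chain $\operatorname{im} f\supseteq \operatorname{im} f^2\supseteq\cdots\supseteq \operatorname{im} f^n\supseteq\cdots$ is stationary, i.e. $f^n(G)=f^{n+1}(G)$ for some $n\in\mathbb N$. *)

theory Defs
  imports Main "HOL-Library.Product_Plus"
begin

definition group_hom :: "('a::ab_group_add \<Rightarrow> 'b::ab_group_add) \<Rightarrow> bool" where
  "group_hom f \<longleftrightarrow> (\<forall>x y. f (x + y) = f x + f y)"

definition strongly_co_Hopfian :: "'a::ab_group_add itself \<Rightarrow> bool" where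
  "strongly_co_Hopfian (_ :: 'a itself) \<longleftrightarrow>
     (\<forall>f :: 'a \<Rightarrow> 'a. group_hom f \<longrightarrow>
        (\<exists>n. range (f ^^ n) = range (f ^^ Suc n)))"

end

theory Submission
  imports Defs
begin

text \<open>
A direct summand A of G is a retract: an endomorphism f of A extends to s \<circ> f \<circ> p on G,
and the projection p maps the image chain of this extension onto that of f. So summands of a
strongly co-Hopfian group are strongly co-Hopfian, with no condition on Hom(B, A).

Conversely, Hom(B, A) = 0 makes every endomorphism F of A \<oplus> B triangular: F leaves B invariant,
acting there as some \<delta>, and induces some \<alpha> on (A \<oplus> B)/B \<cong> A. If the image chains of \<alpha> and \<delta>
are stationary from n on, then F^(2n)(G) = F^(2n+1)(G): modulo B, F^n y agrees with some
F^(n+1) u, and F^n maps the difference c \<in> B to \<delta>^n c, which lies in the stationary image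
\<delta>^(2n+1)(B).
\<close>

lemma funpow_semiconj:
  assumes "\<And>x. p (g x) = f (p x)"
  shows "p ((g ^^ n) x) = (f ^^ n) (p x)"
  using assms by (induction n) auto

lemma image_range_funpow_semiconj:
  assumes "\<And>x. p (g x) = f (p x)" and "surj p"
  shows "p ` range (g ^^ n) = range (f ^^ n)"
proof -
  have "p ` range (g ^^ n) = (f ^^ n) ` range p"
    using funpow_semiconj[of p g f, OF assms(1)] by (simp add: image_image)
  then show ?thesis
    using assms(2) by simp
qed

lemma range_funpow_Suc_subset:
  fixes f :: "'a \<Rightarrow> 'a"
  shows "range (f ^^ Suc n) \<subseteq> range (f ^^ n)"
  by (auto simp: funpow_Suc_right simp del: funpow.simps)

lemma range_funpow_eq_if_stable:
  fixes f :: "'a \<Rightarrow> 'a"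
  assumes stable: "range (f ^^ n) = range (f ^^ Suc n)" and "n \<le> m"
  shows "range (f ^^ m) = range (f ^^ n)"
  using \<open>n \<le> m\<close>
proof (induction m rule: dec_induct)
  case (step m)
  have "range (f ^^ Suc m) = f ` range (f ^^ m)"
    by (simp add: image_comp)
  also have "\<dots> = f ` range (f ^^ n)"
    using step.IH by simp
  also have "\<dots> = range (f ^^ Suc n)"
    by (simp add: image_comp)
  also have "\<dots> = range (f ^^ n)"
    by (rule stable[symmetric])
  finally show ?case .
qed simp

lemma group_hom_comp: "group_hom f \<Longrightarrow> group_hom g \<Longrightarrow> group_hom (\<lambda>x. f (g x))"
  by (simp add: group_hom_def)

lemma group_hom_funpow:
  fixes f :: "'a::ab_group_add \<Rightarrow> 'a"
  shows "group_hom f \<Longrightarrow> group_hom (f ^^ n)"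
  by (induction n) (auto simp: group_hom_def)

lemma group_hom_diff: "group_hom f \<Longrightarrow> f (x - y) = f x - f y"
  unfolding group_hom_def by (metis eq_diff_eq)

lemma group_hom_fst: "group_hom fst"
  and group_hom_snd: "group_hom snd"
  and group_hom_Pair_left: "group_hom (\<lambda>a. (a, 0))"
  and group_hom_Pair_right: "group_hom (\<lambda>b. (0, b))"
  by (simp_all add: group_hom_def)

lemma strongly_co_Hopfian_retract:
  fixes p :: "'c::ab_group_add \<Rightarrow> 'a::ab_group_add" and s :: "'a \<Rightarrow> 'c"
  assumes "group_hom p" "group_hom s" and retraction: "\<And>a. p (s a) = a"
    and "strongly_co_Hopfian TYPE('c)"
  shows "strongly_co_Hopfian TYPE('a)"
  unfolding strongly_co_Hopfian_def
proof (intro allI impI)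
  fix f :: "'a \<Rightarrow> 'a"
  assume "group_hom f"
  define g where "g x = s (f (p x))" for x
  have "group_hom g"
    unfolding g_def by (rule group_hom_comp[OF assms(2) group_hom_comp[OF \<open>group_hom f\<close> assms(1)]])
  then obtain n where n: "range (g ^^ n) = range (g ^^ Suc n)"
    using \<open>strongly_co_Hopfian TYPE('c)\<close> unfolding strongly_co_Hopfian_def by blast
  have semiconj: "p (g x) = f (p x)" for x
    by (simp add: g_def retraction)
  have "surj p"
    using retraction by (metis surjI)
  show "\<exists>n. range (f ^^ n) = range (f ^^ Suc n)"
    using n image_range_funpow_semiconj[of p g f, OF semiconj \<open>surj p\<close>] by metis
qed

lemma range_funpow_stable_extension:
  fixes F :: "'c::ab_group_add \<Rightarrow> 'c" and \<alpha> :: "'a::ab_group_add \<Rightarrow> 'a"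
    and \<delta> :: "'b::ab_group_add \<Rightarrow> 'b" and p :: "'c \<Rightarrow> 'a" and i :: "'b \<Rightarrow> 'c"
  assumes F: "group_hom F" and p: "group_hom p"
    and "surj p" and ker: "\<And>x. p x = 0 \<Longrightarrow> x \<in> range i"
    and quotient: "\<And>x. p (F x) = \<alpha> (p x)" and invariant: "\<And>b. F (i b) = i (\<delta> b)"
    and \<alpha>_stable: "range (\<alpha> ^^ n) = range (\<alpha> ^^ Suc n)"
    and \<delta>_stable: "range (\<delta> ^^ n) = range (\<delta> ^^ Suc n)"
  shows "range (F ^^ (n + n)) = range (F ^^ Suc (n + n))"
proof (rule subset_antisym)
  have F_i: "(F ^^ m) (i b) = i ((\<delta> ^^ m) b)" for m b
    using funpow_semiconj[of i \<delta> F, OF invariant[symmetric]] by simp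
  have p_F: "p ((F ^^ m) x) = (\<alpha> ^^ m) (p x)" for m x
    using funpow_semiconj[of p F \<alpha>, OF quotient] .
  show "range (F ^^ (n + n)) \<subseteq> range (F ^^ Suc (n + n))"
  proof
    fix x
    assume "x \<in> range (F ^^ (n + n))"
    then obtain y where "x = (F ^^ (n + n)) y"
      by blast
    then have x: "x = (F ^^ n) ((F ^^ n) y)"
      by (simp add: funpow_add)
    have "(\<alpha> ^^ n) (p y) \<in> range (\<alpha> ^^ Suc n)"
      unfolding \<alpha>_stable[symmetric] by (rule rangeI)
    then obtain a where a: "(\<alpha> ^^ n) (p y) = (\<alpha> ^^ Suc n) a"
      by blast
    obtain u where "a = p u"
      using \<open>surj p\<close> by (rule surjE)
    then have "p ((F ^^ n) y - (F ^^ Suc n) u) = 0"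
      using a by (simp only: group_hom_diff[OF p] p_F diff_self)
    then obtain c where "(F ^^ n) y - (F ^^ Suc n) u = i c"
      using ker by blast
    then have c: "(F ^^ n) y = (F ^^ Suc n) u + i c"
      by (simp add: diff_eq_eq)
    have "(\<delta> ^^ n) c \<in> range (\<delta> ^^ Suc (n + n))"
      using range_funpow_eq_if_stable[OF \<delta>_stable, of "Suc (n + n)"] by auto
    then obtain b where b: "(\<delta> ^^ n) c = (\<delta> ^^ Suc (n + n)) b"
      by blast
    have "x = (F ^^ n) ((F ^^ Suc n) u) + (F ^^ n) (i c)"
      using x c group_hom_funpow[OF F] by (simp add: group_hom_def del: funpow.simps)
    also have "\<dots> = (F ^^ Suc (n + n)) u + (F ^^ Suc (n + n)) (i b)"
      using b by (simp add: F_i flip: funpow_add[unfolded comp_def, THEN fun_cong] del: funpow.simps)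
    also have "\<dots> = (F ^^ Suc (n + n)) (u + i b)"
      using group_hom_funpow[OF F] by (simp add: group_hom_def del: funpow.simps)
    finally show "x \<in> range (F ^^ Suc (n + n))"
      by (rule image_eqI[OF _ UNIV_I])
  qed
  show "range (F ^^ Suc (n + n)) \<subseteq> range (F ^^ (n + n))"
    by (rule range_funpow_Suc_subset)
qed

lemma strongly_co_Hopfian_prod:
  assumes no_hom: "\<forall>h :: 'b::ab_group_add \<Rightarrow> 'a::ab_group_add. group_hom h \<longrightarrow> h = (\<lambda>_. 0)"
    and "strongly_co_Hopfian TYPE('a)" and "strongly_co_Hopfian TYPE('b)"
  shows "strongly_co_Hopfian TYPE('a \<times> 'b)"
  unfolding strongly_co_Hopfian_def
proof (intro allI impI)
  fix F :: "'a \<times> 'b \<Rightarrow> 'a \<times> 'b"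
  assume F: "group_hom F"
  define \<alpha> where "\<alpha> a = fst (F (a, 0))" for a
  define \<delta> where "\<delta> b = snd (F (0, b))" for b
  have "group_hom \<alpha>"
    unfolding \<alpha>_def by (rule group_hom_comp[OF group_hom_fst group_hom_comp[OF F group_hom_Pair_left]])
  have "group_hom \<delta>"
    unfolding \<delta>_def by (rule group_hom_comp[OF group_hom_snd group_hom_comp[OF F group_hom_Pair_right]])
  have "group_hom (\<lambda>b. fst (F (0, b)))"
    by (rule group_hom_comp[OF group_hom_fst group_hom_comp[OF F group_hom_Pair_right]])
  then have "(\<lambda>b. fst (F (0, b))) = (\<lambda>_. 0)"
    using no_hom by blast
  then have corner: "fst (F (0, b)) = 0" for b
    by (simp add: fun_eq_iff)
  have quotient: "fst (F x) = \<alpha> (fst x)" for x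
  proof -
    have "x = (fst x, 0) + (0, snd x)"
      by simp
    then have "F x = F (fst x, 0) + F (0, snd x)"
      using F unfolding group_hom_def by metis
    then show ?thesis
      by (simp add: \<alpha>_def corner)
  qed
  have invariant: "F (0, b) = (0, \<delta> b)" for b
    by (simp add: \<delta>_def corner prod_eq_iff)
  obtain n\<^sub>1 where n\<^sub>1: "range (\<alpha> ^^ n\<^sub>1) = range (\<alpha> ^^ Suc n\<^sub>1)"
    using \<open>strongly_co_Hopfian TYPE('a)\<close> \<open>group_hom \<alpha>\<close> unfolding strongly_co_Hopfian_def by blast
  obtain n\<^sub>2 where n\<^sub>2: "range (\<delta> ^^ n\<^sub>2) = range (\<delta> ^^ Suc n\<^sub>2)"
    using \<open>strongly_co_Hopfian TYPE('b)\<close> \<open>group_hom \<delta>\<close> unfolding strongly_co_Hopfian_def by blast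
  define n where "n = max n\<^sub>1 n\<^sub>2"
  have "n\<^sub>1 \<le> n" "n\<^sub>2 \<le> n"
    by (simp_all add: n_def)
  then have "range (\<alpha> ^^ n) = range (\<alpha> ^^ Suc n)"
    and "range (\<delta> ^^ n) = range (\<delta> ^^ Suc n)"
    using range_funpow_eq_if_stable[OF n\<^sub>1, of n] range_funpow_eq_if_stable[OF n\<^sub>1, of "Suc n"]
      range_funpow_eq_if_stable[OF n\<^sub>2, of n] range_funpow_eq_if_stable[OF n\<^sub>2, of "Suc n"]
    by simp_all
  moreover have "fst x = 0 \<Longrightarrow> x \<in> range (\<lambda>b. (0, b))" for x :: "'a \<times> 'b"
    by (metis prod.collapse rangeI)
  moreover have "surj (fst :: 'a \<times> 'b \<Rightarrow> 'a)"
    by (rule surjI[of _ "\<lambda>a. (a, 0)"]) simp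
  ultimately have "range (F ^^ (n + n)) = range (F ^^ Suc (n + n))"
    using range_funpow_stable_extension[OF F group_hom_fst, where i = "\<lambda>b. (0, b)"]
      quotient invariant by blast
  then show "\<exists>n. range (F ^^ n) = range (F ^^ Suc n)" ..
qed

theorem mainTheorem1:
  assumes "\<forall>h :: 'b::ab_group_add \<Rightarrow> 'a::ab_group_add. group_hom h \<longrightarrow> h = (\<lambda>_. 0)"
  shows "strongly_co_Hopfian TYPE('a \<times> 'b) \<longleftrightarrow>
         strongly_co_Hopfian TYPE('a) \<and> strongly_co_Hopfian TYPE('b)"
proof (intro iffI conjI)
  assume "strongly_co_Hopfian TYPE('a \<times> 'b)"
  then show "strongly_co_Hopfian TYPE('a)" "strongly_co_Hopfian TYPE('b)"
    by (auto intro: strongly_co_Hopfian_retract[OF group_hom_fst group_hom_Pair_left]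
                    strongly_co_Hopfian_retract[OF group_hom_snd group_hom_Pair_right])
next
  assume "strongly_co_Hopfian TYPE('a) \<and> strongly_co_Hopfian TYPE('b)"
  then show "strongly_co_Hopfian TYPE('a \<times> 'b)"
    using assms strongly_co_Hopfian_prod by blast
qed

end
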